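(* Let $n=n_1+\dots+n_k$ be a partition into positive integers, let $L=U(n_1)\times\cdots\times U(n_k)$ be the natural block-diagonal subgroup of $G=U(n)$, and let $G'=O(n)$. Let $J=\mathrm{diag}(J_1,\dots,J_k)\in M(n,\mathbb{R})$ be block diagonal with $J_i\in M(n_i,\mathbb{R})$, and let $G_J:=\{g\in G:gJ=Jg\}$. Suppose there exist a skew-Hermitian matrix $X\in\mathfrak{u}(n)$ and a sequence $i_0,i_1,\dots,i_l\in\{1,\dots,k\}$ ($l\ge 2$) with $i_0=i_l$ and $i_{a-1}\ne i_a$ ($a=1,\dots,l$) such that $\det(\lambda I_{n_{i_0}}-A_{i_0\cdots i_l}([X,J]))\notin\mathbb{R}[\lambda]$. Then the multiplication map $L\times G'\times G_J\to G$ is not surjective.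
   Context: For $P\in M(n,\mathbb{C})$ written in block form $P=(P_{ij})_{1\le i,j\le k}$ with $P_{ij}\in M(n_i,n_j;\mathbb{C})$, set $\widetilde P_{ij}:=P_{ij}$ if $i<j$ and $\widetilde P_{ij}:=P_{ji}^*$ (conjugate transpose) if $i>j$, and $A_{i_0\cdots i_l}(P):=\widetilde P_{i_0i_1}\widetilde P_{i_1i_2}\cdots\widetilde P_{i_{l-1}i_l}\in M(n_{i_0},\mathbb{C})$. $[X,J]=XJ-JX$; $I_m$ is the identity matrix. *)

theory Defs
  imports "Jordan_Normal_Form.Schur_Decomposition" "Jordan_Normal_Form.Char_Poly"
begin

(* Partition n = n_1 + ... + n_k given by a list ns of positive block sizes;
   blocks are indexed 0..k-1 (0-based). *)
definition blk_off :: "nat list \<Rightarrow> nat \<Rightarrow> nat" where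
  "blk_off ns i = sum_list (take i ns)"

definition in_block :: "nat list \<Rightarrow> nat \<Rightarrow> nat \<Rightarrow> bool" where
  "in_block ns i p \<longleftrightarrow> i < length ns \<and> blk_off ns i \<le> p \<and> p < blk_off ns i + ns ! i"

definition block_diagonal :: "nat list \<Rightarrow> 'a::zero mat \<Rightarrow> bool" where
  "block_diagonal ns M \<longleftrightarrow> (\<forall>p q i j. in_block ns i p \<and> in_block ns j q \<and> i \<noteq> j \<longrightarrow> M $$ (p, q) = 0)"

definition blk :: "nat list \<Rightarrow> 'a mat \<Rightarrow> nat \<Rightarrow> nat \<Rightarrow> 'a mat" where
  "blk ns P i j = mat (ns ! i) (ns ! j) (\<lambda>(a, b). P $$ (blk_off ns i + a, blk_off ns j + b))"

(* \<tilde>P_{ij} = P_{ij} if i < j, and (P_{ji})^* if i > j (the case i = j is never used) *)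
definition blk_tilde :: "nat list \<Rightarrow> complex mat \<Rightarrow> nat \<Rightarrow> nat \<Rightarrow> complex mat" where
  "blk_tilde ns P i j = (if i < j then blk ns P i j else mat_adjoint (blk ns P j i))"

fun A_path :: "nat list \<Rightarrow> complex mat \<Rightarrow> nat list \<Rightarrow> complex mat" where
  "A_path ns P [] = 1\<^sub>m 0"
| "A_path ns P [i] = 1\<^sub>m (ns ! i)"
| "A_path ns P (i # j # rest) = blk_tilde ns P i j * A_path ns P (j # rest)"

definition commutator :: "'a::comm_ring mat \<Rightarrow> 'a mat \<Rightarrow> 'a mat" where
  "commutator X Y = X * Y - Y * X"

definition unitary_group :: "nat \<Rightarrow> complex mat set" where
  "unitary_group n = {U. U \<in> carrier_mat n n \<and> mat_adjoint U * U = 1\<^sub>m n}"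

definition real_mat :: "complex mat \<Rightarrow> bool" where
  "real_mat M \<longleftrightarrow> (\<forall>i < dim_row M. \<forall>j < dim_col M. M $$ (i, j) \<in> \<real>)"

definition orthogonal_group :: "nat \<Rightarrow> complex mat set" where
  "orthogonal_group n = {U. U \<in> carrier_mat n n \<and> real_mat U \<and> transpose_mat U * U = 1\<^sub>m n}"

definition block_unitary_group :: "nat list \<Rightarrow> complex mat set" where
  "block_unitary_group ns = {U \<in> unitary_group (sum_list ns). block_diagonal ns U}"

definition centralizer_group :: "nat \<Rightarrow> complex mat \<Rightarrow> complex mat set" where
  "centralizer_group n J = {g \<in> unitary_group n. g * J = J * g}"

definition real_poly :: "complex poly \<Rightarrow> bool" where
  "real_poly p \<longleftrightarrow> (\<forall>i. coeff p i \<in> \<real>)"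

end

theory Submission
  imports Defs
begin

(*
  If U(n) = L O(n) G_J, every unitary g factors as g = a b c, and then g J g^* = a b J b^T a^*.
  As a is block diagonal and the path is closed, the path product A_{i_0...i_l} of g J g^* is
  conjugate by the unitary block a_{i_0} to that of the real matrix b J b^T, so its characteristic
  polynomial is real for every unitary g. Take for g the Cayley transform
  g_t = (1 + tX/2)(1 - tX/2)^{-1}: then g_t J g_t^* = J + t D_t with D_t -> [X, J] as t -> 0.
  Since J is block diagonal and consecutive indices of the path differ, only off-diagonal blocks
  enter, so the path product of g_t J g_t^* is t^l times that of D_t. Hence the path product of
  D_t has a real characteristic polynomial for all small t /= 0, and by continuity so has the
  path product of [X, J].
*)

lemma conjugate_one [simp]: "conjugate (1 :: 'a :: conjugatable_field) = 1"
proof -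
  have "conjugate 1 * conjugate 1 = (conjugate 1 :: 'a)"
    by (simp flip: conjugate_dist_mul)
  then show ?thesis by (metis conjugate_zero_iff mult_cancel_left1)
qed

lemma conjugate_diff: "conjugate (a - b :: 'a :: conjugatable_ring) = conjugate a - conjugate b"
  by (simp only: diff_conv_add_uminus conjugate_dist_add conjugate_neg)

lemma mat_adjoint_dim [simp]:
  "dim_row (mat_adjoint A) = dim_col A" "dim_col (mat_adjoint A) = dim_row A"
  by (simp_all add: mat_adjoint_def)

lemma index_mat_adjoint [simp]:
  "i < dim_col A \<Longrightarrow> j < dim_row A \<Longrightarrow> mat_adjoint A $$ (i, j) = conjugate (A $$ (j, i))"
  by (simp add: mat_adjoint_def mat_of_rows_def)

lemma mat_adjoint_carrier [simp]: "A \<in> carrier_mat m n \<Longrightarrow> mat_adjoint A \<in> carrier_mat n m"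
  unfolding carrier_mat_def by simp

lemma mat_adjoint_mat_adjoint [simp]: "mat_adjoint (mat_adjoint A) = A"
  by (rule eq_matI) auto

lemma mat_adjoint_one [simp]: "mat_adjoint (1\<^sub>m n) = 1\<^sub>m n"
  by (rule eq_matI) auto

lemma mat_adjoint_smult: "mat_adjoint (c \<cdot>\<^sub>m A) = conjugate c \<cdot>\<^sub>m mat_adjoint A"
  by (rule eq_matI) (auto simp: conjugate_dist_mul)

lemma mat_adjoint_minus:
  "A \<in> carrier_mat m n \<Longrightarrow> B \<in> carrier_mat m n \<Longrightarrow> mat_adjoint (A - B) = mat_adjoint A - mat_adjoint B"
  by (rule eq_matI) (auto simp: conjugate_diff)

lemma mat_adjoint_mult:
  assumes "A \<in> carrier_mat m k" "B \<in> carrier_mat k n"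
  shows "mat_adjoint (A * B) = mat_adjoint B * mat_adjoint A"
  using assms
  by (intro eq_matI) (auto simp: scalar_prod_def sum_conjugate conjugate_dist_mul mult.commute)

lemma mat_adjoint_mult3:
  assumes "A \<in> carrier_mat m k" "B \<in> carrier_mat k l" "C \<in> carrier_mat l n"
  shows "mat_adjoint (A * B * C) = mat_adjoint C * mat_adjoint B * mat_adjoint A"
  unfolding mat_adjoint_mult[OF mult_carrier_mat[OF assms(1,2)] assms(3)] mat_adjoint_mult[OF assms(1,2)]
  by (rule assoc_mult_mat[symmetric]) (use assms in auto)

lemma unitary_mult_adjoint:
  "U \<in> carrier_mat n n \<Longrightarrow> mat_adjoint U * U = 1\<^sub>m n \<Longrightarrow> U * mat_adjoint U = 1\<^sub>m n"
  using mat_mult_left_right_inverse[of "mat_adjoint U" n U] by simp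

lemma smult_smult_mat: "a \<cdot>\<^sub>m (b \<cdot>\<^sub>m A) = (a * b :: 'a :: semigroup_mult) \<cdot>\<^sub>m A"
  by (rule eq_matI) (auto simp: mult.assoc)

lemma one_smult_mat [simp]: "(1 :: 'a :: monoid_mult) \<cdot>\<^sub>m A = A"
  by (rule eq_matI) auto

lemma mult_inverse_cancel_left_mat:
  fixes A :: "'a :: semiring_1 mat"
  shows "A \<in> carrier_mat n n \<Longrightarrow> B \<in> carrier_mat n n \<Longrightarrow> C \<in> carrier_mat n m \<Longrightarrow> A * B = 1\<^sub>m n
   \<Longrightarrow> A * (B * C) = C"
  using assoc_mult_mat[of A n n B n C m] left_mult_one_mat[of C n m] by simp

lemma mult_cancel_middle_mat:
  fixes X :: "'a :: semiring_1 mat"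
  assumes "X \<in> carrier_mat m n" "U \<in> carrier_mat n n" "V \<in> carrier_mat n n" "Y \<in> carrier_mat n k"
    and "U * V = 1\<^sub>m n"
  shows "X * U * (V * Y) = X * Y"
proof -
  have "X * U * (V * Y) = X * (U * (V * Y))"
    using assms by (intro assoc_mult_mat) auto
  also have "U * (V * Y) = Y"
    using assms by (rule_tac mult_inverse_cancel_left_mat) auto
  finally show ?thesis .
qed

lemma conj_mult_mat:
  assumes "A \<in> carrier_mat n n" "B \<in> carrier_mat n n" "M \<in> carrier_mat n n"
  shows "(A * B) * M * mat_adjoint (A * B) = A * (B * M * mat_adjoint B) * mat_adjoint A"
  using assms
  by (simp add: mat_adjoint_mult[OF assms(1,2)] assoc_mult_mat[of _ n n _ n _ n] mult_carrier_mat[of _ n n _ n])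

lemma unitary_conj_cancel:
  assumes "U \<in> unitary_group n" "M \<in> carrier_mat n n"
  shows "mat_adjoint U * (U * M * mat_adjoint U) * U = M"
proof -
  have U: "U \<in> carrier_mat n n" "mat_adjoint U * U = 1\<^sub>m n"
    using assms(1) by (simp_all add: unitary_group_def)
  have "mat_adjoint U * (U * X) = X" if "X \<in> carrier_mat n n" for X
    using U that by (intro mult_inverse_cancel_left_mat) auto
  with U assms(2) show ?thesis
    by (simp add: assoc_mult_mat[of _ n n _ n _ n] mult_carrier_mat[of _ n n _ n])
qed

lemma commutator_carrier:
  "X \<in> carrier_mat n n \<Longrightarrow> Y \<in> carrier_mat n n \<Longrightarrow> commutator X Y \<in> carrier_mat n n"
  unfolding commutator_def by (simp add: minus_carrier_mat mult_carrier_mat[of _ n n _ n])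

section \<open>Blocks of partitioned matrices\<close>

lemma blk_off_Cons_Suc [simp]: "blk_off (m # ns) (Suc i) = m + blk_off ns i"
  by (simp add: blk_off_def)

lemma blk_off_add_le: "i < length ns \<Longrightarrow> blk_off ns i + ns ! i \<le> sum_list ns"
  by (induction ns arbitrary: i) (auto simp: blk_off_def nth_Cons split: nat.split)

lemma in_block_less: "in_block ns i p \<Longrightarrow> p < sum_list ns"
  unfolding in_block_def using blk_off_add_le[of i ns] by linarith

lemma in_block_offset [simp]: "i < length ns \<Longrightarrow> a < ns ! i \<Longrightarrow> in_block ns i (blk_off ns i + a)"
  by (simp add: in_block_def)

lemma in_block_exists: "p < sum_list ns \<Longrightarrow> \<exists>i. in_block ns i p"
proof (induction ns arbitrary: p)
  case (Cons m ns)
  show ?case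
  proof (cases "p < m")
    case True
    then have "in_block (m # ns) 0 p" by (simp add: in_block_def blk_off_def)
    then show ?thesis ..
  next
    case False
    with Cons obtain i where "in_block ns i (p - m)" by fastforce
    with False have "in_block (m # ns) (Suc i) p" by (auto simp: in_block_def)
    then show ?thesis ..
  qed
qed simp

lemma block_diagonalD:
  "block_diagonal ns A \<Longrightarrow> in_block ns i p \<Longrightarrow> in_block ns j q \<Longrightarrow> i \<noteq> j \<Longrightarrow> A $$ (p, q) = 0"
  unfolding block_diagonal_def by blast

lemma block_diagonal_mat_adjoint:
  assumes "block_diagonal ns A" "A \<in> carrier_mat (sum_list ns) (sum_list ns)"
  shows "block_diagonal ns (mat_adjoint A)"
  unfolding block_diagonal_def
proof (intro allI impI)
  fix p q i j assume *: "in_block ns i p \<and> in_block ns j q \<and> i \<noteq> j"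
  then have "A $$ (q, p) = 0" using block_diagonalD[OF assms(1)] by blast
  with * show "mat_adjoint A $$ (p, q) = 0" using assms(2) in_block_less by fastforce
qed

lemma sum_over_block:
  assumes "i < length ns" and "\<And>r. r < sum_list ns \<Longrightarrow> \<not> in_block ns i r \<Longrightarrow> f r = 0"
  shows "(\<Sum>r<sum_list ns. f r) = (\<Sum>c<ns ! i. f (blk_off ns i + c))"
proof -
  have "(\<Sum>r<sum_list ns. f r) = (\<Sum>r\<in>{blk_off ns i..<blk_off ns i + ns ! i}. f r)"
    using assms blk_off_add_le[OF assms(1)]
    by (intro sum.mono_neutral_right) (auto simp: in_block_def)
  also have "\<dots> = (\<Sum>c<ns ! i. f (blk_off ns i + c))"
    by (rule sum.reindex_bij_witness[of _ "\<lambda>c. blk_off ns i + c" "\<lambda>r. r - blk_off ns i"]) auto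
  finally show ?thesis .
qed

lemma block_diagonal_row_sum:
  fixes A :: "'a :: semiring_0 mat"
  assumes "block_diagonal ns A" "i < length ns" "a < ns ! i"
  shows "(\<Sum>r<sum_list ns. A $$ (blk_off ns i + a, r) * f r)
       = (\<Sum>c<ns ! i. A $$ (blk_off ns i + a, blk_off ns i + c) * f (blk_off ns i + c))"
proof (rule sum_over_block)
  fix r assume "r < sum_list ns" "\<not> in_block ns i r"
  then obtain k where "in_block ns k r" "k \<noteq> i" using in_block_exists by blast
  then show "A $$ (blk_off ns i + a, r) * f r = 0"
    using block_diagonalD[OF assms(1) in_block_offset[OF assms(2,3)]] by simp
qed (rule assms)

lemma block_diagonal_col_sum:
  fixes A :: "'a :: semiring_0 mat"
  assumes "block_diagonal ns A" "j < length ns" "b < ns ! j"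
  shows "(\<Sum>r<sum_list ns. f r * A $$ (r, blk_off ns j + b))
       = (\<Sum>c<ns ! j. f (blk_off ns j + c) * A $$ (blk_off ns j + c, blk_off ns j + b))"
proof (rule sum_over_block)
  fix r assume "r < sum_list ns" "\<not> in_block ns j r"
  then obtain k where "in_block ns k r" "k \<noteq> j" using in_block_exists by blast
  then show "f r * A $$ (r, blk_off ns j + b) = 0"
    using block_diagonalD[OF assms(1) _ in_block_offset[OF assms(2,3)]] by simp
qed (rule assms)

lemma blk_carrier [simp]: "blk ns P i j \<in> carrier_mat (ns ! i) (ns ! j)"
  and blk_dim [simp]: "dim_row (blk ns P i j) = ns ! i" "dim_col (blk ns P i j) = ns ! j"
  and index_blk [simp]:
    "a < ns ! i \<Longrightarrow> b < ns ! j \<Longrightarrow> blk ns P i j $$ (a, b) = P $$ (blk_off ns i + a, blk_off ns j + b)"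
  by (simp_all add: blk_def)

lemma blk_index_less:
  "i < length ns \<Longrightarrow> a < ns ! i \<Longrightarrow> blk_off ns i + a < sum_list ns"
  using blk_off_add_le[of i ns] by linarith

lemma blk_mult_block_diagonal_left:
  assumes "block_diagonal ns A" "A \<in> carrier_mat (sum_list ns) (sum_list ns)"
    "B \<in> carrier_mat (sum_list ns) (sum_list ns)" "i < length ns" "j < length ns"
  shows "blk ns (A * B) i j = blk ns A i i * blk ns B i j"
proof (rule eq_matI)
  fix a b assume "a < dim_row (blk ns A i i * blk ns B i j)" "b < dim_col (blk ns A i i * blk ns B i j)"
  then have ab: "a < ns ! i" "b < ns ! j" by simp_all
  then show "blk ns (A * B) i j $$ (a, b) = (blk ns A i i * blk ns B i j) $$ (a, b)"
    using assms blk_index_less[OF assms(4) ab(1)] blk_index_less[OF assms(5) ab(2)]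
    by (simp add: scalar_prod_def atLeast0LessThan block_diagonal_row_sum[OF assms(1,4) ab(1)])
qed simp_all

lemma blk_mult_block_diagonal_right:
  assumes "block_diagonal ns A" "A \<in> carrier_mat (sum_list ns) (sum_list ns)"
    "B \<in> carrier_mat (sum_list ns) (sum_list ns)" "i < length ns" "j < length ns"
  shows "blk ns (B * A) i j = blk ns B i j * blk ns A j j"
proof (rule eq_matI)
  fix a b assume "a < dim_row (blk ns B i j * blk ns A j j)" "b < dim_col (blk ns B i j * blk ns A j j)"
  then have ab: "a < ns ! i" "b < ns ! j" by simp_all
  then show "blk ns (B * A) i j $$ (a, b) = (blk ns B i j * blk ns A j j) $$ (a, b)"
    using assms blk_index_less[OF assms(4) ab(1)] blk_index_less[OF assms(5) ab(2)]
    by (simp add: scalar_prod_def atLeast0LessThan block_diagonal_col_sum[OF assms(1,5) ab(2)])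
qed simp_all

lemma blk_mat_adjoint:
  assumes "P \<in> carrier_mat (sum_list ns) (sum_list ns)" "i < length ns" "j < length ns"
  shows "blk ns (mat_adjoint P) i j = mat_adjoint (blk ns P j i)"
  using assms blk_index_less by (intro eq_matI) auto

lemma blk_one: "i < length ns \<Longrightarrow> blk ns (1\<^sub>m (sum_list ns)) i i = 1\<^sub>m (ns ! i)"
  using blk_index_less by (intro eq_matI) auto

lemma blk_conj_block_diagonal:
  assumes "block_diagonal ns a" "a \<in> carrier_mat (sum_list ns) (sum_list ns)"
    "P \<in> carrier_mat (sum_list ns) (sum_list ns)" "i < length ns" "j < length ns"
  shows "blk ns (mat_adjoint a * P * a) i j = mat_adjoint (blk ns a i i) * blk ns P i j * blk ns a j j"
proof -
  have "blk ns (mat_adjoint a * P * a) i j = blk ns (mat_adjoint a * P) i j * blk ns a j j"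
    using assms by (intro blk_mult_block_diagonal_right) auto
  also have "blk ns (mat_adjoint a * P) i j = blk ns (mat_adjoint a) i i * blk ns P i j"
    using assms by (intro blk_mult_block_diagonal_left block_diagonal_mat_adjoint) auto
  also have "blk ns (mat_adjoint a) i i = mat_adjoint (blk ns a i i)"
    using assms by (simp add: blk_mat_adjoint)
  finally show ?thesis .
qed

lemma blk_unitary_block_diagonal:
  assumes "block_diagonal ns a" "a \<in> unitary_group (sum_list ns)" "i < length ns"
  shows "mat_adjoint (blk ns a i i) * blk ns a i i = 1\<^sub>m (ns ! i)"
    and "blk ns a i i * mat_adjoint (blk ns a i i) = 1\<^sub>m (ns ! i)"
proof -
  have a: "a \<in> carrier_mat (sum_list ns) (sum_list ns)" "mat_adjoint a * a = 1\<^sub>m (sum_list ns)"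
    using assms(2) by (simp_all add: unitary_group_def)
  then have a': "a * mat_adjoint a = 1\<^sub>m (sum_list ns)" by (rule unitary_mult_adjoint)
  have adj: "blk ns (mat_adjoint a) i i = mat_adjoint (blk ns a i i)"
    using a assms(3) by (simp add: blk_mat_adjoint)
  have "mat_adjoint (blk ns a i i) * blk ns a i i = blk ns (mat_adjoint a) i i * blk ns a i i"
    by (simp add: adj)
  also have "\<dots> = blk ns (mat_adjoint a * a) i i"
    using a assms(1,3) by (intro blk_mult_block_diagonal_left[symmetric] block_diagonal_mat_adjoint) auto
  finally have "mat_adjoint (blk ns a i i) * blk ns a i i = blk ns (mat_adjoint a * a) i i" .
  then show "mat_adjoint (blk ns a i i) * blk ns a i i = 1\<^sub>m (ns ! i)"
    using a assms(3) by (simp add: blk_one)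
  have "blk ns a i i * mat_adjoint (blk ns a i i) = blk ns (a * mat_adjoint a) i i"
    unfolding adj[symmetric] using a assms(1,3)
    by (intro blk_mult_block_diagonal_left[symmetric]) auto
  then show "blk ns a i i * mat_adjoint (blk ns a i i) = 1\<^sub>m (ns ! i)"
    using a' assms(3) by (simp add: blk_one)
qed

lemma blk_add_smult_off_diagonal:
  fixes J :: "'a :: semiring_0 mat"
  assumes "block_diagonal ns J" "J \<in> carrier_mat (sum_list ns) (sum_list ns)"
    "D \<in> carrier_mat (sum_list ns) (sum_list ns)" "i < length ns" "j < length ns" "i \<noteq> j"
  shows "blk ns (J + c \<cdot>\<^sub>m D) i j = c \<cdot>\<^sub>m blk ns D i j"
proof (rule eq_matI)
  fix a b assume "a < dim_row (c \<cdot>\<^sub>m blk ns D i j)" "b < dim_col (c \<cdot>\<^sub>m blk ns D i j)"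
  then have ab: "a < ns ! i" "b < ns ! j" by simp_all
  then have "J $$ (blk_off ns i + a, blk_off ns j + b) = 0"
    using assms by (intro block_diagonalD[OF assms(1)]) simp_all
  then show "blk ns (J + c \<cdot>\<^sub>m D) i j $$ (a, b) = (c \<cdot>\<^sub>m blk ns D i j) $$ (a, b)"
    using assms ab blk_index_less by simp
qed simp_all

lemma blk_tilde_carrier [simp]: "blk_tilde ns P i j \<in> carrier_mat (ns ! i) (ns ! j)"
  by (simp add: blk_tilde_def)

lemma blk_tilde_conj_block_diagonal:
  assumes "block_diagonal ns a" "a \<in> carrier_mat (sum_list ns) (sum_list ns)"
    "P \<in> carrier_mat (sum_list ns) (sum_list ns)" "i < length ns" "j < length ns"
  shows "blk_tilde ns (mat_adjoint a * P * a) i j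
       = mat_adjoint (blk ns a i i) * blk_tilde ns P i j * blk ns a j j"
  using assms blk_conj_block_diagonal[OF assms] blk_conj_block_diagonal[OF assms(1-3,5,4)]
  by (simp add: blk_tilde_def mat_adjoint_mult3[of _ "ns ! j" "ns ! j" _ "ns ! i" _ "ns ! i"])

lemma blk_tilde_add_smult:
  fixes c :: complex
  assumes "block_diagonal ns J" "J \<in> carrier_mat (sum_list ns) (sum_list ns)"
    "D \<in> carrier_mat (sum_list ns) (sum_list ns)" "c \<in> \<real>" "i < length ns" "j < length ns" "i \<noteq> j"
  shows "blk_tilde ns (J + c \<cdot>\<^sub>m D) i j = c \<cdot>\<^sub>m blk_tilde ns D i j"
  using assms blk_add_smult_off_diagonal[OF assms(1-3)]
  by (auto simp: blk_tilde_def mat_adjoint_smult Reals_cnj_iff)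

section \<open>Products along paths of blocks\<close>

definition block_path :: "nat list \<Rightarrow> nat list \<Rightarrow> bool" where
  "block_path ns path \<longleftrightarrow> path \<noteq> [] \<and> (\<forall>i \<in> set path. i < length ns) \<and>
     (\<forall>k. Suc k < length path \<longrightarrow> path ! k \<noteq> path ! Suc k)"

lemma block_path_simps [simp]:
  "\<not> block_path ns []"
  "block_path ns [i] \<longleftrightarrow> i < length ns"
  "block_path ns (i # j # rest) \<longleftrightarrow> i < length ns \<and> i \<noteq> j \<and> block_path ns (j # rest)"
proof -
  have split_first: "(\<forall>k. Q k) \<longleftrightarrow> Q 0 \<and> (\<forall>k. Q (Suc k))" for Q :: "nat \<Rightarrow> bool"
    by (metis not0_implies_Suc)
  show "\<not> block_path ns []" "block_path ns [i] \<longleftrightarrow> i < length ns"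
    by (simp_all add: block_path_def)
  show "block_path ns (i # j # rest) \<longleftrightarrow> i < length ns \<and> i \<noteq> j \<and> block_path ns (j # rest)"
    unfolding block_path_def by (subst split_first) auto
qed

lemma block_path_Cons_less: "block_path ns (i # rest) \<Longrightarrow> i < length ns"
  by (simp add: block_path_def)

lemma A_path_carrier: "path \<noteq> [] \<Longrightarrow> A_path ns P path \<in> carrier_mat (ns ! hd path) (ns ! last path)"
  by (induction ns P path rule: A_path.induct) (auto intro: mult_carrier_mat[OF blk_tilde_carrier])

lemma A_path_conj_block_unitary:
  assumes "block_diagonal ns a" "a \<in> unitary_group (sum_list ns)"
    and "P \<in> carrier_mat (sum_list ns) (sum_list ns)" and "block_path ns path"
  shows "A_path ns (mat_adjoint a * P * a) path
       = mat_adjoint (blk ns a (hd path) (hd path)) * A_path ns P path * blk ns a (last path) (last path)"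
  using assms(4)
proof (induction path rule: induct_list012)
  case (2 i)
  then show ?case using blk_unitary_block_diagonal(1)[OF assms(1,2)] by simp
next
  case (3 i j rest)
  define l where "l = last (j # rest)"
  let ?a = "\<lambda>k. blk ns a k k" and ?l = l and ?M = "A_path ns P (j # rest)"
  have a: "a \<in> carrier_mat (sum_list ns) (sum_list ns)" using assms(2) by (simp add: unitary_group_def)
  have M: "?M \<in> carrier_mat (ns ! j) (ns ! ?l)"
    using A_path_carrier[of "j # rest"] by (simp add: l_def)
  have "blk_tilde ns (mat_adjoint a * P * a) i j = mat_adjoint (?a i) * blk_tilde ns P i j * ?a j"
    using 3 assms(1,3) a by (intro blk_tilde_conj_block_diagonal) (auto dest: block_path_Cons_less)
  moreover have "A_path ns (mat_adjoint a * P * a) (j # rest) = mat_adjoint (?a j) * ?M * ?a ?l"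
    using 3 by (simp add: l_def)
  ultimately have "A_path ns (mat_adjoint a * P * a) (i # j # rest)
      = (mat_adjoint (?a i) * blk_tilde ns P i j * ?a j) * (mat_adjoint (?a j) * ?M * ?a ?l)"
    by simp
  also have "\<dots> = (mat_adjoint (?a i) * blk_tilde ns P i j * ?a j) * (mat_adjoint (?a j) * (?M * ?a ?l))"
    unfolding assoc_mult_mat[OF mat_adjoint_carrier[OF blk_carrier] M blk_carrier] ..
  also have "\<dots> = mat_adjoint (?a i) * blk_tilde ns P i j * (?M * ?a ?l)"
    using 3 by (intro mult_cancel_middle_mat[OF mult_carrier_mat[OF mat_adjoint_carrier[OF blk_carrier] blk_tilde_carrier]
          blk_carrier _ mult_carrier_mat[OF M blk_carrier]]
        blk_unitary_block_diagonal(2)[OF assms(1,2)]) (auto dest: block_path_Cons_less)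
  also have "\<dots> = mat_adjoint (?a i) * (blk_tilde ns P i j * ?M) * ?a ?l"
    unfolding assoc_mult_mat[OF mat_adjoint_carrier[OF blk_carrier] mult_carrier_mat[OF blk_tilde_carrier M] blk_carrier]
      assoc_mult_mat[OF blk_tilde_carrier M blk_carrier]
    by (rule assoc_mult_mat) (use M in auto)
  finally show ?case by (simp add: l_def)
qed simp

lemma A_path_add_smult:
  fixes c :: complex
  assumes "block_diagonal ns J" "J \<in> carrier_mat (sum_list ns) (sum_list ns)"
    "D \<in> carrier_mat (sum_list ns) (sum_list ns)" "c \<in> \<real>" and "block_path ns path"
  shows "A_path ns (J + c \<cdot>\<^sub>m D) path = c ^ (length path - 1) \<cdot>\<^sub>m A_path ns D path"
  using assms(5)
proof (induction path rule: induct_list012)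
  case (3 i j rest)
  have M: "A_path ns D (j # rest) \<in> carrier_mat (ns ! j) (ns ! last (j # rest))"
    using A_path_carrier[of "j # rest"] by simp
  have "blk_tilde ns (J + c \<cdot>\<^sub>m D) i j = c \<cdot>\<^sub>m blk_tilde ns D i j"
    using 3 assms(1-4) by (intro blk_tilde_add_smult) (auto dest: block_path_Cons_less)
  with 3 have "A_path ns (J + c \<cdot>\<^sub>m D) (i # j # rest)
      = (c \<cdot>\<^sub>m blk_tilde ns D i j) * (c ^ length rest \<cdot>\<^sub>m A_path ns D (j # rest))"
    by simp
  also have "\<dots> = c \<cdot>\<^sub>m (blk_tilde ns D i j * (c ^ length rest \<cdot>\<^sub>m A_path ns D (j # rest)))"
    by (rule mult_smult_assoc_mat[OF blk_tilde_carrier smult_carrier_mat[OF M]])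
  also have "blk_tilde ns D i j * (c ^ length rest \<cdot>\<^sub>m A_path ns D (j # rest))
      = c ^ length rest \<cdot>\<^sub>m (blk_tilde ns D i j * A_path ns D (j # rest))"
    by (rule mult_smult_distrib[OF blk_tilde_carrier M])
  finally show ?case by (simp add: smult_smult_mat)
qed simp_all

section \<open>Real characteristic polynomials\<close>

lemma real_mat_mult:
  "real_mat A \<Longrightarrow> real_mat B \<Longrightarrow> A \<in> carrier_mat m k \<Longrightarrow> B \<in> carrier_mat k n \<Longrightarrow> real_mat (A * B)"
  unfolding real_mat_def by (auto simp: scalar_prod_def intro!: Reals_mult)

lemma real_mat_mat_adjoint: "real_mat A \<Longrightarrow> real_mat (mat_adjoint A)"
  unfolding real_mat_def by (auto simp: Reals_cnj_iff)

lemma real_mat_one: "real_mat (1\<^sub>m n)"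
  unfolding real_mat_def by auto

lemma real_mat_blk:
  assumes "real_mat P" "P \<in> carrier_mat (sum_list ns) (sum_list ns)" "i < length ns" "j < length ns"
  shows "real_mat (blk ns P i j)"
  using assms blk_index_less unfolding real_mat_def by auto

lemma real_mat_A_path:
  assumes "real_mat P" "P \<in> carrier_mat (sum_list ns) (sum_list ns)" and "block_path ns path"
  shows "real_mat (A_path ns P path)"
  using assms(3)
proof (induction path rule: induct_list012)
  case (3 i j rest)
  then have "real_mat (blk_tilde ns P i j)"
    using assms(1,2) by (auto simp: blk_tilde_def real_mat_blk real_mat_mat_adjoint dest: block_path_Cons_less)
  with 3 show ?case
    using A_path_carrier[of "j # rest" ns P] by (auto intro: real_mat_mult[OF _ _ blk_tilde_carrier])
qed (simp_all add: real_mat_one)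

lemma real_poly_char_poly:
  assumes "real_mat A" "A \<in> carrier_mat m m"
  shows "real_poly (char_poly A)"
proof -
  have "A = of_real_hom.mat_hom (map_mat Re A)"
    using assms unfolding real_mat_def by (intro eq_matI) auto
  then have "char_poly A = map_poly of_real (char_poly (map_mat Re A))"
    using assms(2) by (metis map_carrier_mat of_real_hom.char_poly_hom)
  then show ?thesis by (simp add: real_poly_def coeff_map_poly)
qed

lemma real_poly_iff_real_values: "real_poly p \<longleftrightarrow> (\<forall>x \<in> \<real>. poly p x \<in> \<real>)"
proof
  assume "real_poly p"
  then show "\<forall>x \<in> \<real>. poly p x \<in> \<real>"
    unfolding real_poly_def by (auto simp: poly_altdef intro!: Reals_mult Reals_power)
next
  assume real_values: "\<forall>x \<in> \<real>. poly p x \<in> \<real>"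
  have "\<real> \<subseteq> {x. poly (p - map_poly cnj p) x = 0}"
    using real_values by (auto simp: Reals_cnj_iff)
  moreover have "infinite (\<real> :: complex set)"
    unfolding Reals_def by (metis finite_imageD infinite_UNIV_char_0 inj_of_real)
  ultimately have "p - map_poly cnj p = 0"
    using poly_roots_finite finite_subset by blast
  then show "real_poly p"
    unfolding real_poly_def by (metis Reals_cnj_iff coeff_map_poly complex_cnj_zero eq_iff_diff_eq_0)
qed

lemma poly_char_poly:
  fixes M :: "'a :: field mat"
  shows "M \<in> carrier_mat m m \<Longrightarrow> poly (char_poly M) x = det (x \<cdot>\<^sub>m 1\<^sub>m m - M)"
proof -
  assume M: "M \<in> carrier_mat m m"
  then have "- char_matrix M x = x \<cdot>\<^sub>m 1\<^sub>m m - M"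
    unfolding char_matrix_def by (intro eq_matI) auto
  then show ?thesis using char_poly_matrix[OF M, of x] M by simp
qed

lemma poly_char_poly_smult:
  fixes A :: "'a :: field mat"
  shows "A \<in> carrier_mat m m \<Longrightarrow> poly (char_poly (c \<cdot>\<^sub>m A)) (c * x) = c ^ m * poly (char_poly A) x"
proof -
  assume A: "A \<in> carrier_mat m m"
  then have "(c * x) \<cdot>\<^sub>m 1\<^sub>m m - c \<cdot>\<^sub>m A = c \<cdot>\<^sub>m (x \<cdot>\<^sub>m 1\<^sub>m m - A)"
    by (intro eq_matI) (auto simp: algebra_simps)
  with A show ?thesis by (simp add: poly_char_poly[OF smult_carrier_mat[OF A]] poly_char_poly[OF A])
qed

lemma real_poly_char_poly_smult:
  fixes c :: complex
  assumes "c \<in> \<real>" "c \<noteq> 0" "A \<in> carrier_mat m m" and "real_poly (char_poly (c \<cdot>\<^sub>m A))"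
  shows "real_poly (char_poly A)"
  unfolding real_poly_iff_real_values
proof
  fix x :: complex assume "x \<in> \<real>"
  then have "c ^ m * poly (char_poly A) x \<in> \<real>"
    using assms by (metis poly_char_poly_smult real_poly_iff_real_values Reals_mult)
  then have "c ^ m * poly (char_poly A) x / c ^ m \<in> \<real>"
    using assms(1) by (intro Reals_divide Reals_power)
  then show "poly (char_poly A) x \<in> \<real>" using assms(2) by simp
qed

lemma char_poly_unitary_conj:
  assumes "U \<in> unitary_group m" "M \<in> carrier_mat m m"
  shows "char_poly (mat_adjoint U * M * U) = char_poly M"
proof (rule char_poly_similar, rule similar_matI)
  show "{mat_adjoint U * M * U, M, mat_adjoint U, U} \<subseteq> carrier_mat m m"
    and "mat_adjoint U * U = 1\<^sub>m m" and "U * mat_adjoint U = 1\<^sub>m m"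
    using assms unitary_mult_adjoint by (auto simp: unitary_group_def)
qed simp

lemma centralizer_conj:
  assumes "c \<in> centralizer_group n J" "J \<in> carrier_mat n n"
  shows "c * J * mat_adjoint c = J"
proof -
  have c: "c \<in> carrier_mat n n" "c * J = J * c" "c * mat_adjoint c = 1\<^sub>m n"
    using assms(1) unitary_mult_adjoint by (auto simp: centralizer_group_def unitary_group_def)
  then have "c * J * mat_adjoint c = J * (c * mat_adjoint c)"
    using assms(2) by (simp add: assoc_mult_mat[of _ n n _ n _ n])
  with c assms(2) show ?thesis by simp
qed

lemma decomposition_conj_reduce:
  assumes "a \<in> unitary_group n" "b \<in> carrier_mat n n" "c \<in> centralizer_group n J" "J \<in> carrier_mat n n"
  shows "mat_adjoint a * ((a * b * c) * J * mat_adjoint (a * b * c)) * a = b * J * mat_adjoint b"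
proof -
  have a: "a \<in> carrier_mat n n" and c: "c \<in> carrier_mat n n"
    using assms(1,3) by (auto simp: unitary_group_def centralizer_group_def)
  have "(a * b * c) * J * mat_adjoint (a * b * c) = (a * b) * (c * J * mat_adjoint c) * mat_adjoint (a * b)"
    using a assms(2,4) c by (intro conj_mult_mat) auto
  also have "\<dots> = (a * b) * J * mat_adjoint (a * b)"
    by (simp only: centralizer_conj[OF assms(3,4)])
  also have "\<dots> = a * (b * J * mat_adjoint b) * mat_adjoint a"
    using a assms(2,4) by (rule conj_mult_mat)
  finally have conj: "(a * b * c) * J * mat_adjoint (a * b * c) = a * (b * J * mat_adjoint b) * mat_adjoint a" .
  have "b * J * mat_adjoint b \<in> carrier_mat n n"
    using assms(2,4) by (simp add: mult_carrier_mat[of _ n n _ n])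
  then show ?thesis
    unfolding conj by (rule unitary_conj_cancel[OF assms(1)])
qed

lemma real_poly_char_poly_A_path_decomposable:
  assumes J: "block_diagonal ns J" "J \<in> carrier_mat (sum_list ns) (sum_list ns)" "real_mat J"
    and a: "a \<in> block_unitary_group ns" and b: "b \<in> orthogonal_group (sum_list ns)"
    and c: "c \<in> centralizer_group (sum_list ns) J"
    and path: "block_path ns path" "hd path = last path"
  shows "real_poly (char_poly (A_path ns ((a * b * c) * J * mat_adjoint (a * b * c)) path))"
proof -
  define P where "P = (a * b * c) * J * mat_adjoint (a * b * c)"
  let ?a0 = "blk ns a (hd path) (hd path)" and ?N = "sum_list ns" and ?m = "ns ! hd path"
  have a': "a \<in> unitary_group ?N" "block_diagonal ns a"
    using a by (simp_all add: block_unitary_group_def)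
  have bc: "b \<in> carrier_mat ?N ?N" "real_mat b" and cc: "c \<in> carrier_mat ?N ?N"
    using b c by (auto simp: orthogonal_group_def centralizer_group_def unitary_group_def)
  have ac: "a \<in> carrier_mat ?N ?N" using a'(1) by (simp add: unitary_group_def)
  have P: "P \<in> carrier_mat ?N ?N"
    using ac bc cc J(2) by (simp add: P_def mult_carrier_mat[of _ ?N ?N _ ?N])
  have "mat_adjoint a * P * a = b * J * mat_adjoint b"
    unfolding P_def using a'(1) bc(1) c J(2) by (rule decomposition_conj_reduce)
  then have "real_mat (mat_adjoint a * P * a)"
    using bc J by (auto intro!: real_mat_mult real_mat_mat_adjoint)
  then have "real_poly (char_poly (A_path ns (mat_adjoint a * P * a) path))"
    using path ac P A_path_carrier[of path]
    by (intro real_poly_char_poly real_mat_A_path) (auto simp: block_path_def)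
  moreover have "A_path ns (mat_adjoint a * P * a) path = mat_adjoint ?a0 * A_path ns P path * ?a0"
    using A_path_conj_block_unitary[OF a'(2,1) P path(1)] path(2) by simp
  moreover have "?a0 \<in> unitary_group ?m"
    using blk_unitary_block_diagonal(1)[OF a'(2,1)] path(1)
    by (cases path) (auto simp: unitary_group_def block_path_def)
  moreover have "A_path ns P path \<in> carrier_mat ?m ?m"
    using A_path_carrier[of path] path by (simp add: block_path_def)
  ultimately show ?thesis
    by (simp add: char_poly_unitary_conj P_def)
qed

section \<open>Continuity of matrix-valued functions\<close>

definition continuous_mat :: "'a :: t2_space filter \<Rightarrow> ('a \<Rightarrow> 'b :: topological_space mat) \<Rightarrow> nat \<Rightarrow> nat \<Rightarrow> bool" where
  "continuous_mat F A nr nc \<longleftrightarrow>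
     (\<forall>t. A t \<in> carrier_mat nr nc) \<and> (\<forall>i < nr. \<forall>j < nc. continuous F (\<lambda>t. A t $$ (i, j)))"

lemma continuous_matD:
  assumes "continuous_mat F A nr nc"
  shows "A t \<in> carrier_mat nr nc" and "i < nr \<Longrightarrow> j < nc \<Longrightarrow> continuous F (\<lambda>t. A t $$ (i, j))"
  using assms unfolding continuous_mat_def by auto

lemma continuous_mat_const: "A \<in> carrier_mat nr nc \<Longrightarrow> continuous_mat F (\<lambda>t. A) nr nc"
  unfolding continuous_mat_def by auto

lemma continuous_mat_minus:
  fixes A B :: "'a :: t2_space \<Rightarrow> 'b :: topological_group_add mat"
  assumes "continuous_mat F A nr nc" "continuous_mat F B nr nc"
  shows "continuous_mat F (\<lambda>t. A t - B t) nr nc"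
  using continuous_matD[OF assms(1)] continuous_matD[OF assms(2)]
    carrier_matD[OF continuous_matD(1)[OF assms(1)]] carrier_matD[OF continuous_matD(1)[OF assms(2)]]
  by (auto simp: continuous_mat_def intro: continuous_diff minus_carrier_mat)

lemma continuous_mat_smult:
  fixes A :: "'a :: t2_space \<Rightarrow> 'b :: real_normed_algebra mat"
  assumes "continuous F f" "continuous_mat F A nr nc"
  shows "continuous_mat F (\<lambda>t. f t \<cdot>\<^sub>m A t) nr nc"
  using assms continuous_matD[OF assms(2)] carrier_matD[OF continuous_matD(1)[OF assms(2)]]
  by (auto simp: continuous_mat_def intro: continuous_mult)

lemma continuous_mat_mult:
  fixes A B :: "'a :: t2_space \<Rightarrow> 'b :: {real_normed_algebra, comm_monoid_add} mat"
  assumes "continuous_mat F A nr n" "continuous_mat F B n nc"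
  shows "continuous_mat F (\<lambda>t. A t * B t) nr nc"
  using continuous_matD[OF assms(1)] continuous_matD[OF assms(2)]
    carrier_matD[OF continuous_matD(1)[OF assms(1)]] carrier_matD[OF continuous_matD(1)[OF assms(2)]]
  by (auto simp: continuous_mat_def scalar_prod_def intro!: continuous_sum continuous_mult mult_carrier_mat)

lemma continuous_mat_adjoint:
  assumes "continuous_mat F A nr nc"
  shows "continuous_mat F (\<lambda>t. mat_adjoint (A t :: complex mat)) nc nr"
  using continuous_matD[OF assms] carrier_matD[OF continuous_matD(1)[OF assms]]
  by (auto simp: continuous_mat_def intro: continuous_cnj)

lemma continuous_mat_blk:
  assumes "continuous_mat F A (sum_list ns) (sum_list ns)" "i < length ns" "j < length ns"
  shows "continuous_mat F (\<lambda>t. blk ns (A t) i j) (ns ! i) (ns ! j)"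
  using assms continuous_matD[OF assms(1)] blk_index_less by (auto simp: continuous_mat_def)

lemma continuous_mat_blk_tilde:
  assumes "continuous_mat F A (sum_list ns) (sum_list ns)" "i < length ns" "j < length ns"
  shows "continuous_mat F (\<lambda>t. blk_tilde ns (A t) i j) (ns ! i) (ns ! j)"
  using assms by (cases "i < j") (simp_all add: blk_tilde_def continuous_mat_blk continuous_mat_adjoint)

lemma continuous_mat_A_path:
  assumes "continuous_mat F A (sum_list ns) (sum_list ns)" "block_path ns path"
  shows "continuous_mat F (\<lambda>t. A_path ns (A t) path) (ns ! hd path) (ns ! last path)"
  using assms(2)
proof (induction path rule: induct_list012)
  case (2 i)
  then show ?case by (simp add: continuous_mat_const)
next
  case (3 i j rest)
  then have "continuous_mat F (\<lambda>t. blk_tilde ns (A t) i j) (ns ! i) (ns ! j)"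
    using assms(1) by (auto intro: continuous_mat_blk_tilde dest: block_path_Cons_less)
  with 3 show ?case by (auto intro: continuous_mat_mult)
qed simp

lemma continuous_det:
  fixes A :: "'a :: t2_space \<Rightarrow> 'b :: {real_normed_algebra_1, comm_ring_1} mat"
  assumes "continuous_mat F A n n"
  shows "continuous F (\<lambda>t. det (A t))"
  unfolding det_def'[OF continuous_matD(1)[OF assms]]
  using continuous_matD(2)[OF assms] permutes_in_image
  by (intro continuous_sum continuous_mult continuous_const continuous_prod) fastforce

lemma continuous_mat_delete:
  assumes "continuous_mat F A n n"
  shows "continuous_mat F (\<lambda>t. mat_delete (A t) i j) (n - 1) (n - 1)"
  using continuous_matD[OF assms] carrier_matD[OF continuous_matD(1)[OF assms]]
  by (auto simp: continuous_mat_def mat_delete_def intro!: mat_delete_carrier)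

lemma continuous_mat_adj_mat:
  fixes A :: "'a :: t2_space \<Rightarrow> 'b :: {real_normed_algebra_1, comm_ring_1} mat"
  assumes "continuous_mat F A n n"
  shows "continuous_mat F (\<lambda>t. adj_mat (A t)) n n"
  using continuous_matD[OF assms] carrier_matD[OF continuous_matD(1)[OF assms]] adj_mat(1)
  by (auto simp: continuous_mat_def adj_mat_def cofactor_def
      intro!: continuous_mult continuous_det continuous_mat_delete assms)

lemma Reals_tendsto_limit:
  fixes f :: "'a \<Rightarrow> complex"
  assumes "(f \<longlongrightarrow> l) F" "F \<noteq> bot" "eventually (\<lambda>x. f x \<in> \<real>) F"
  shows "l \<in> \<real>"
proof -
  have "closed {z :: complex. Im z = 0}"
    by (intro closed_Collect_eq continuous_intros)
  then show ?thesis
    using assms Lim_in_closed_set[of "{z. Im z = 0}"] by (simp add: complex_is_Real_iff)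
qed

lemma real_poly_char_poly_limit:
  fixes A :: "'a :: {t2_space, perfect_space} \<Rightarrow> complex mat"
  assumes "continuous_mat (at a) A m m" "eventually (\<lambda>t. real_poly (char_poly (A t))) (at a)"
  shows "real_poly (char_poly (A a))"
  unfolding real_poly_iff_real_values
proof
  fix x :: complex assume x: "x \<in> \<real>"
  have "continuous (at a) (\<lambda>t. det (x \<cdot>\<^sub>m 1\<^sub>m m - A t))"
    by (intro continuous_det[of _ _ m] continuous_mat_minus continuous_mat_const assms(1)) simp
  moreover have "eventually (\<lambda>t. det (x \<cdot>\<^sub>m 1\<^sub>m m - A t) \<in> \<real>) (at a)"
    using assms(2) by eventually_elim
      (use x in \<open>simp add: real_poly_iff_real_values poly_char_poly[OF continuous_matD(1)[OF assms(1)]]\<close>)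
  ultimately have "det (x \<cdot>\<^sub>m 1\<^sub>m m - A a) \<in> \<real>"
    by (intro Reals_tendsto_limit[of _ _ "at a"]) (simp_all add: continuous_at)
  then show "poly (char_poly (A a)) x \<in> \<real>"
    by (simp add: poly_char_poly[OF continuous_matD(1)[OF assms(1)]])
qed

section \<open>The Cayley transform\<close>

(* The inverse of 1 - tX/2 via the adjugate (a junk value where it is singular);
   2 R_t - 1 = (1 + tX/2)(1 - tX/2)^{-1} is the Cayley transform of tX. *)
definition cayley_resolvent :: "nat \<Rightarrow> complex mat \<Rightarrow> real \<Rightarrow> complex mat" where
  "cayley_resolvent n X t =
     (let S = 1\<^sub>m n - (of_real t / 2) \<cdot>\<^sub>m X in (1 / det S) \<cdot>\<^sub>m adj_mat S)"

lemma mat_adjoint_one_minus_smult_skew: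
  fixes X :: "complex mat"
  assumes "X \<in> carrier_mat n n" "mat_adjoint X = - X" "c \<in> \<real>"
  shows "mat_adjoint (1\<^sub>m n - c \<cdot>\<^sub>m X) = 1\<^sub>m n + c \<cdot>\<^sub>m X"
proof -
  have "cnj (X $$ (j, i)) = - X $$ (i, j)" if "i < n" "j < n" for i j
    using arg_cong[OF assms(2), of "\<lambda>A. A $$ (i, j)"] assms(1) that by simp
  then show ?thesis using assms by (intro eq_matI) (auto simp: Reals_cnj_iff)
qed

lemma inverse_one_minus_smult_skew_adjoint:
  fixes X W :: "complex mat"
  assumes "X \<in> carrier_mat n n" "mat_adjoint X = - X" "c \<in> \<real>"
    and "W \<in> carrier_mat n n" "(1\<^sub>m n - c \<cdot>\<^sub>m X) * W = 1\<^sub>m n"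
  shows "mat_adjoint W * (1\<^sub>m n + c \<cdot>\<^sub>m X) = 1\<^sub>m n"
  using mat_adjoint_mult[OF _ assms(4), of "1\<^sub>m n - c \<cdot>\<^sub>m X" n] assms
  by (simp add: mat_adjoint_one_minus_smult_skew minus_carrier_mat)

lemma cayley_unitary:
  fixes X W :: "complex mat" and c :: complex
  assumes X: "X \<in> carrier_mat n n" "mat_adjoint X = - X" and c: "c \<in> \<real>"
    and W: "W \<in> carrier_mat n n" "(1\<^sub>m n - c \<cdot>\<^sub>m X) * W = 1\<^sub>m n"
  shows "2 \<cdot>\<^sub>m W - 1\<^sub>m n \<in> unitary_group n"
proof -
  \<comment> \<open>With all dimensions fixed to n the simplifier can discharge the carrier side conditions.\<close>
  note square_algebra = assoc_mult_mat[of _ n n _ n _ n] mult_carrier_mat[of _ n n _ n]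
    minus_mult_distrib_mat[of _ n n _ _ n] add_mult_distrib_mat[of _ n n _ _ n]
    mult_minus_distrib_mat[of _ n n _ n] mult_add_distrib_mat[of _ n n _ n]
    mult_smult_distrib[of _ n n _ n] mult_smult_assoc_mat[of _ n n _ n] minus_carrier_mat
  have Wa: "mat_adjoint W \<in> carrier_mat n n" using W by simp
  from arg_cong[OF inverse_one_minus_smult_skew_adjoint[OF X c W], of "\<lambda>A. A * W"]
  have F2: "mat_adjoint W * W + c \<cdot>\<^sub>m (mat_adjoint W * (X * W)) = W"
    using W(1) X(1) Wa by (simp add: square_algebra)
  have F1: "mat_adjoint W * W - c \<cdot>\<^sub>m (mat_adjoint W * (X * W)) = mat_adjoint W"
    using W(1) X(1) Wa arg_cong[OF W(2), of "\<lambda>A. mat_adjoint W * A"] by (simp add: square_algebra)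
  have "mat_adjoint (2 \<cdot>\<^sub>m W - 1\<^sub>m n) * (2 \<cdot>\<^sub>m W - 1\<^sub>m n)
      = 2 \<cdot>\<^sub>m (2 \<cdot>\<^sub>m (mat_adjoint W * W) - W) - (2 \<cdot>\<^sub>m mat_adjoint W - 1\<^sub>m n)"
    using W Wa by (simp add: mat_adjoint_minus[of _ n n] mat_adjoint_smult square_algebra)
  \<comment> \<open>Adding F1 and F2 gives 2 W^* W = W + W^*, which makes the expansion collapse.\<close>
  also have "\<dots> = 1\<^sub>m n"
  proof (rule eq_matI)
    fix i j assume "i < dim_row (1\<^sub>m n :: complex mat)" "j < dim_col (1\<^sub>m n :: complex mat)"
    note dims = this carrier_matD[OF W(1)] carrier_matD[OF X(1)]
    let ?p = "(mat_adjoint W * W) $$ (i, j)" and ?q = "(mat_adjoint W * (X * W)) $$ (i, j)"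
    have v: "cnj (W $$ (j, i)) = ?p - c * ?q"
      using arg_cong[OF F1, of "\<lambda>A. A $$ (i, j)"] dims by (simp del: index_mult_mat(1))
    have w: "W $$ (i, j) = ?p + c * ?q"
      using arg_cong[OF F2, of "\<lambda>A. A $$ (i, j)"] dims by (simp del: index_mult_mat(1))
    show "(2 \<cdot>\<^sub>m (2 \<cdot>\<^sub>m (mat_adjoint W * W) - W) - (2 \<cdot>\<^sub>m mat_adjoint W - 1\<^sub>m n)) $$ (i, j)
        = 1\<^sub>m n $$ (i, j)"
      using dims by (simp del: index_mult_mat(1) add: v w algebra_simps)
  qed (use W in auto)
  finally show ?thesis using W by (simp add: unitary_group_def minus_carrier_mat)
qed

lemma cayley_conj:
  fixes X W J :: "complex mat"
  assumes X: "X \<in> carrier_mat n n" "mat_adjoint X = - X" and c: "c \<in> \<real>"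
    and W: "W \<in> carrier_mat n n" "(1\<^sub>m n - c \<cdot>\<^sub>m X) * W = 1\<^sub>m n" and J: "J \<in> carrier_mat n n"
  shows "(2 \<cdot>\<^sub>m W - 1\<^sub>m n) * J * mat_adjoint (2 \<cdot>\<^sub>m W - 1\<^sub>m n)
       = J + (2 * c) \<cdot>\<^sub>m commutator X (W * J * mat_adjoint W)"
proof -
  note square_algebra = assoc_mult_mat[of _ n n _ n _ n] mult_carrier_mat[of _ n n _ n]
    minus_mult_distrib_mat[of _ n n _ _ n] add_mult_distrib_mat[of _ n n _ _ n]
    mult_minus_distrib_mat[of _ n n _ n] mult_add_distrib_mat[of _ n n _ n]
    mult_smult_distrib[of _ n n _ n] mult_smult_assoc_mat[of _ n n _ n] minus_carrier_mat
  have Wa: "mat_adjoint W \<in> carrier_mat n n" using W by simp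
  from arg_cong[OF W(2), of "\<lambda>A. A * (J * mat_adjoint W)"]
  have G1: "W * (J * mat_adjoint W) - c \<cdot>\<^sub>m (X * (W * (J * mat_adjoint W))) = J * mat_adjoint W"
    using W(1) X(1) J Wa by (simp add: square_algebra)
  from arg_cong[OF inverse_one_minus_smult_skew_adjoint[OF X c W], of "\<lambda>A. (W * J) * A"]
  have G2: "W * (J * mat_adjoint W) + c \<cdot>\<^sub>m (W * (J * (mat_adjoint W * X))) = W * J"
    using W(1) X(1) J Wa by (simp add: square_algebra)
  have "(2 \<cdot>\<^sub>m W - 1\<^sub>m n) * J * mat_adjoint (2 \<cdot>\<^sub>m W - 1\<^sub>m n)
      = 2 \<cdot>\<^sub>m (2 \<cdot>\<^sub>m (W * (J * mat_adjoint W)) - J * mat_adjoint W) - (2 \<cdot>\<^sub>m (W * J) - J)"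
    using W(1) J Wa by (simp add: mat_adjoint_minus[of _ n n] mat_adjoint_smult square_algebra)
  also have "\<dots> = J + (2 * c) \<cdot>\<^sub>m (X * (W * (J * mat_adjoint W)) - W * (J * (mat_adjoint W * X)))"
  proof (rule eq_matI)
    fix i j assume "i < dim_row (J + (2 * c) \<cdot>\<^sub>m (X * (W * (J * mat_adjoint W)) - W * (J * (mat_adjoint W * X))))"
      "j < dim_col (J + (2 * c) \<cdot>\<^sub>m (X * (W * (J * mat_adjoint W)) - W * (J * (mat_adjoint W * X))))"
    note dims = this carrier_matD[OF W(1)] carrier_matD[OF X(1)] carrier_matD[OF J]
    let ?M = "(W * (J * mat_adjoint W)) $$ (i, j)"
    have u: "(J * mat_adjoint W) $$ (i, j) = ?M - c * (X * (W * (J * mat_adjoint W))) $$ (i, j)"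
      using arg_cong[OF G1, of "\<lambda>A. A $$ (i, j)"] dims by (simp del: index_mult_mat(1))
    have z: "(W * J) $$ (i, j) = ?M + c * (W * (J * (mat_adjoint W * X))) $$ (i, j)"
      using arg_cong[OF G2, of "\<lambda>A. A $$ (i, j)"] dims by (simp del: index_mult_mat(1))
    show "(2 \<cdot>\<^sub>m (2 \<cdot>\<^sub>m (W * (J * mat_adjoint W)) - J * mat_adjoint W) - (2 \<cdot>\<^sub>m (W * J) - J)) $$ (i, j)
        = (J + (2 * c) \<cdot>\<^sub>m (X * (W * (J * mat_adjoint W)) - W * (J * (mat_adjoint W * X)))) $$ (i, j)"
      using dims by (simp del: index_mult_mat(1) add: u z algebra_simps)
  qed (use W(1) X(1) J in auto)
  also have "\<dots> = J + (2 * c) \<cdot>\<^sub>m commutator X (W * J * mat_adjoint W)"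
    using W(1) X(1) J Wa by (simp add: commutator_def square_algebra)
  finally show ?thesis .
qed

lemma cayley_resolvent_inverse:
  assumes "X \<in> carrier_mat n n" "det (1\<^sub>m n - (of_real t / 2) \<cdot>\<^sub>m X) \<noteq> 0"
  shows "(1\<^sub>m n - (of_real t / 2) \<cdot>\<^sub>m X) * cayley_resolvent n X t = 1\<^sub>m n"
proof -
  let ?S = "1\<^sub>m n - (of_real t / 2) \<cdot>\<^sub>m X"
  have S: "?S \<in> carrier_mat n n" using assms(1) by (simp add: minus_carrier_mat)
  have "?S * cayley_resolvent n X t = (1 / det ?S) \<cdot>\<^sub>m (?S * adj_mat ?S)"
    unfolding cayley_resolvent_def Let_def by (rule mult_smult_distrib[OF S adj_mat(1)[OF S]])
  with assms(2) show ?thesis by (simp add: adj_mat(2)[OF S] smult_smult_mat)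
qed

lemma continuous_cayley_resolvent:
  assumes "X \<in> carrier_mat n n"
  shows "continuous_mat (at 0) (cayley_resolvent n X) n n"
    and "cayley_resolvent n X 0 = 1\<^sub>m n"
    and "eventually (\<lambda>t. det (1\<^sub>m n - (of_real t / 2) \<cdot>\<^sub>m X) \<noteq> 0) (at 0)"
proof -
  let ?S = "\<lambda>t. 1\<^sub>m n - (of_real t / 2) \<cdot>\<^sub>m X"
  have S: "continuous_mat (at 0) ?S n n"
    using assms by (intro continuous_mat_minus continuous_mat_smult continuous_mat_const continuous_intros) auto
  have S0: "?S 0 = 1\<^sub>m n" using assms by (intro eq_matI) auto
  have det: "isCont (\<lambda>t. det (?S t)) 0" "det (?S 0) = 1"
    using continuous_det[OF S] S0 by simp_all
  show "continuous_mat (at 0) (cayley_resolvent n X) n n"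
    unfolding cayley_resolvent_def Let_def
    using det by (intro continuous_mat_smult continuous_mat_adj_mat S isCont_divide) auto
  have "(1\<^sub>m n :: complex mat) = adj_mat (1\<^sub>m n) * 1\<^sub>m n"
    using adj_mat(3)[of "1\<^sub>m n :: complex mat" n] by simp
  also have "\<dots> = adj_mat (1\<^sub>m n)"
    using right_mult_one_mat[OF adj_mat(1)[of "1\<^sub>m n :: complex mat" n]] by simp
  finally have "adj_mat (1\<^sub>m n) = (1\<^sub>m n :: complex mat)" ..
  then show "cayley_resolvent n X 0 = 1\<^sub>m n"
    unfolding cayley_resolvent_def Let_def S0 by simp
  show "eventually (\<lambda>t. det (?S t) \<noteq> 0) (at 0)"
    using det unfolding continuous_at by (intro tendsto_imp_eventually_ne) auto
qed

lemma eventually_real_poly_char_poly_cayley: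
  fixes J X :: "complex mat" and ns path :: "nat list"
  defines "R \<equiv> cayley_resolvent (sum_list ns) X"
  assumes J: "block_diagonal ns J" "J \<in> carrier_mat (sum_list ns) (sum_list ns)"
    and X: "X \<in> carrier_mat (sum_list ns) (sum_list ns)" "mat_adjoint X = - X"
    and path: "block_path ns path" "hd path = last path"
    and orbit: "\<And>g. g \<in> unitary_group (sum_list ns) \<Longrightarrow>
      real_poly (char_poly (A_path ns (g * J * mat_adjoint g) path))"
  shows "eventually (\<lambda>t. real_poly (char_poly (A_path ns (commutator X (R t * J * mat_adjoint (R t))) path)))
    (at 0)"
proof -
  let ?N = "sum_list ns" and ?D = "\<lambda>t. commutator X (R t * J * mat_adjoint (R t))"
  have R: "R t \<in> carrier_mat ?N ?N" for t
    unfolding R_def using continuous_matD(1)[OF continuous_cayley_resolvent(1)[OF X(1)]] .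
  have A: "A_path ns (?D t) path \<in> carrier_mat (ns ! hd path) (ns ! hd path)" for t
    using A_path_carrier[of path] path by (simp add: block_path_def)
  have key: "real_poly (char_poly (A_path ns (?D t) path))"
    if t: "t \<noteq> 0" and det: "det (1\<^sub>m ?N - (of_real t / 2) \<cdot>\<^sub>m X) \<noteq> 0" for t
  proof -
    let ?c = "complex_of_real t / 2" and ?g = "2 \<cdot>\<^sub>m R t - 1\<^sub>m ?N"
    have W: "R t \<in> carrier_mat ?N ?N" "(1\<^sub>m ?N - ?c \<cdot>\<^sub>m X) * R t = 1\<^sub>m ?N"
      using R cayley_resolvent_inverse[OF X(1) det] by (simp_all add: R_def)
    have c: "?c \<in> \<real>" by simp
    have "real_poly (char_poly (A_path ns (?g * J * mat_adjoint ?g) path))"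
      by (rule orbit[OF cayley_unitary[OF X c W]])
    moreover have "?g * J * mat_adjoint ?g = J + of_real t \<cdot>\<^sub>m ?D t"
      using cayley_conj[OF X c W J(2)] by simp
    moreover have "A_path ns (J + of_real t \<cdot>\<^sub>m ?D t) path = of_real t ^ (length path - 1) \<cdot>\<^sub>m A_path ns (?D t) path"
      using J X(1) R path(1) W(1)
      by (intro A_path_add_smult commutator_carrier) (simp_all add: mult_carrier_mat[of _ ?N ?N _ ?N])
    ultimately have scaled: "real_poly (char_poly (of_real t ^ (length path - 1) \<cdot>\<^sub>m A_path ns (?D t) path))"
      by simp
    have "of_real t ^ (length path - 1) \<in> \<real>" "of_real t ^ (length path - 1) \<noteq> (0 :: complex)"
      using t by simp_all
    from real_poly_char_poly_smult[OF this A scaled] show ?thesis .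
  qed
  have "eventually (\<lambda>t. t \<noteq> 0) (at (0 :: real))"
    by (simp add: eventually_at_filter)
  then show ?thesis
    using continuous_cayley_resolvent(3)[OF X(1)] by eventually_elim (rule key)
qed

lemma real_poly_char_poly_A_path_commutator:
  fixes J X :: "complex mat"
  assumes J: "block_diagonal ns J" "J \<in> carrier_mat (sum_list ns) (sum_list ns)"
    and X: "X \<in> carrier_mat (sum_list ns) (sum_list ns)" "mat_adjoint X = - X"
    and path: "block_path ns path" "hd path = last path"
    and orbit: "\<And>g. g \<in> unitary_group (sum_list ns) \<Longrightarrow>
      real_poly (char_poly (A_path ns (g * J * mat_adjoint g) path))"
  shows "real_poly (char_poly (A_path ns (commutator X J) path))"
proof -
  let ?R = "cayley_resolvent (sum_list ns) X"
  let ?D = "\<lambda>t. commutator X (?R t * J * mat_adjoint (?R t))"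
  note R = continuous_cayley_resolvent[OF X(1)]
  have M: "continuous_mat (at 0) (\<lambda>t. ?R t * J * mat_adjoint (?R t)) (sum_list ns) (sum_list ns)"
    by (rule continuous_mat_mult[OF continuous_mat_mult[OF R(1) continuous_mat_const[OF J(2)]]
          continuous_mat_adjoint[OF R(1)]])
  have "continuous_mat (at 0) ?D (sum_list ns) (sum_list ns)"
    unfolding commutator_def
    by (rule continuous_mat_minus[OF continuous_mat_mult[OF continuous_mat_const[OF X(1)] M]
          continuous_mat_mult[OF M continuous_mat_const[OF X(1)]]])
  from continuous_mat_A_path[OF this path(1)]
  have "continuous_mat (at 0) (\<lambda>t. A_path ns (?D t) path) (ns ! hd path) (ns ! hd path)"
    by (simp only: path(2))
  from real_poly_char_poly_limit[OF this eventually_real_poly_char_poly_cayley[OF J X path orbit]]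
  show ?thesis
    using J(2) by (simp add: R(2))
qed

theorem lemma6p3:
  fixes ns :: "nat list" and J X :: "complex mat" and path :: "nat list"
  defines "n \<equiv> sum_list ns"
  assumes pos: "\<forall>m \<in> set ns. 0 < m"
    and J_carrier: "J \<in> carrier_mat n n" and J_real: "real_mat J"
    and J_blockdiag: "block_diagonal ns J"
    and X_carrier: "X \<in> carrier_mat n n" and X_skew: "mat_adjoint X = - X"
    and path_len: "length path \<ge> 3"
    and path_range: "\<forall>i \<in> set path. i < length ns"
    and path_closed: "hd path = last path"
    and path_distinct: "\<forall>a. Suc a < length path \<longrightarrow> path ! a \<noteq> path ! Suc a"
    and nonreal: "\<not> real_poly (char_poly (A_path ns (commutator X J) path))"
  shows "\<not> (\<forall>g \<in> unitary_group n. \<exists>a \<in> block_unitary_group ns. \<exists>b \<in> orthogonal_group n.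
             \<exists>c \<in> centralizer_group n J. g = a * b * c)"
proof
  \<comment> \<open>Empty blocks do no harm.\<close>
  assume decomposition: "\<forall>g \<in> unitary_group n. \<exists>a \<in> block_unitary_group ns. \<exists>b \<in> orthogonal_group n.
             \<exists>c \<in> centralizer_group n J. g = a * b * c"
  have path: "block_path ns path"
    using path_len path_range path_distinct by (auto simp: block_path_def)
  have "real_poly (char_poly (A_path ns (commutator X J) path))"
  proof (rule real_poly_char_poly_A_path_commutator[OF J_blockdiag J_carrier[unfolded n_def]
        X_carrier[unfolded n_def] X_skew path path_closed])
    fix g assume "g \<in> unitary_group (sum_list ns)"
    then obtain a b c where abc: "a \<in> block_unitary_group ns" "b \<in> orthogonal_group n"
      "c \<in> centralizer_group n J" and g: "g = a * b * c"
      using decomposition unfolding n_def by blast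
    show "real_poly (char_poly (A_path ns (g * J * mat_adjoint g) path))"
      unfolding g using J_blockdiag J_carrier J_real abc path path_closed unfolding n_def
      by (rule real_poly_char_poly_A_path_decomposable)
  qed
  with nonreal show False ..
qed

end
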